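(* If $C$ is a sorting network on $n$ channels with depth $d$, then there is a co-saturated sorting network $N$ on $n$ channels with depth $d$.
   Context: Channels are numbered $1,\ldots,n$. A comparator network on $n$ channels of depth $d$ is a sequence $C=L_1;\ldots;L_d$ of layers; each layer is a set of comparators $(i,j)$ with $1\le i<j\le n$, and each channel occurs in at most one comparator of a given layer. An input $\bar x\in\{0,1\}^n$ propagates as follows: $\bar x_0=\bar x$, and $\bar x_k$ is obtained from $\bar x_{k-1}$ by, for each $(i,j)\in L_k$, putting the minimum of the values at positions $i,j$ at position $i$ and the maximum at position $j$. The output is $C(\bar x)=\bar x_d$, and $C$ is a sorting network if $C(\bar x)$ is sorted in non-decreasing order for every $\bar x\in\{0,1\}^n$. A channel is used in layer $L_\ell$ if it occurs in a comparator of $L_\ell$. The last layer $L_d$ is in last layer normal form (llnf) if every comparator in $L_d$ is of the form $(i,i+1)$ and there is no $i<n$ with both $i$ and $i+1$ unused in $L_d$. The blocks (or $(d-1)$-blocks) of $C$ are the vertex sets of connected components of the graph on $\{1,\ldots,n\}$ with an edge $\{i,j\}$ for each comparator $(i,j)\in L_d$; when $L_d$ is in llnf, each block is either a single channel unused in $L_d$ or a pair $\{i,i+1\}$ with $(i,i+1)\in L_d$, and the blocks are ordered top to bottom as consecutive intervals. A sorting network of depth $d$ is co-saturated if: (i) its last layer is in llnf; (ii) there are no two consecutive blocks each of which contains a channel unused in layer $L_{d-1}$; and (iii) whenever $(i,i+1)\in L_d$ and channels $i$ and $i+1$ are both unused in $L_{d-1}$, the channels $i-1$ and $i+2$ (whenever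 they exist, i.e. lie in $\{1,\ldots,n\}$) are used in $L_d$. *)

theory Defs
  imports Main
begin

type_synonym layer = "(nat \<times> nat) set"
type_synonym network = "layer list"

definition is_layer :: "nat \<Rightarrow> layer \<Rightarrow> bool" where
  "is_layer n L \<longleftrightarrow>
     (\<forall>(i,j)\<in>L. 1 \<le> i \<and> i < j \<and> j \<le> n) \<and>
     (\<forall>c1\<in>L. \<forall>c2\<in>L. c1 \<noteq> c2 \<longrightarrow> {fst c1, snd c1} \<inter> {fst c2, snd c2} = {})"

definition is_network :: "nat \<Rightarrow> network \<Rightarrow> bool" where
  "is_network n C \<longleftrightarrow> (\<forall>L\<in>set C. is_layer n L)"

definition used :: "layer \<Rightarrow> nat \<Rightarrow> bool" where
  "used L c \<longleftrightarrow> (\<exists>(i,j)\<in>L. c = i \<or> c = j)"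

text \<open>One layer applied to a 0/1 input (False = 0, True = 1).\<close>
definition apply_layer :: "layer \<Rightarrow> (nat \<Rightarrow> bool) \<Rightarrow> (nat \<Rightarrow> bool)" where
  "apply_layer L x = (\<lambda>k.
     if (\<exists>j. (k,j) \<in> L) then min (x k) (x (THE j. (k,j) \<in> L))
     else if (\<exists>i. (i,k) \<in> L) then max (x (THE i. (i,k) \<in> L)) (x k)
     else x k)"

definition run :: "network \<Rightarrow> (nat \<Rightarrow> bool) \<Rightarrow> (nat \<Rightarrow> bool)" where
  "run C x = fold apply_layer C x"

definition sorted_on :: "nat \<Rightarrow> (nat \<Rightarrow> bool) \<Rightarrow> bool" where
  "sorted_on n y \<longleftrightarrow> (\<forall>i j. 1 \<le> i \<longrightarrow> i \<le> j \<longrightarrow> j \<le> n \<longrightarrow> y i \<le> y j)"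

text \<open>Sorting network: sorts every 0/1 input on channels 1..n (values outside 1..n are
  irrelevant since comparators only touch channels 1..n).\<close>
definition sorting_network :: "nat \<Rightarrow> network \<Rightarrow> bool" where
  "sorting_network n C \<longleftrightarrow> is_network n C \<and> (\<forall>x. sorted_on n (run C x))"

definition last_layer :: "network \<Rightarrow> layer" where
  "last_layer C = (if C = [] then {} else last C)"

definition prev_layer :: "network \<Rightarrow> layer" where
  "prev_layer C = (if length C < 2 then {} else C ! (length C - 2))"

definition llnf :: "nat \<Rightarrow> layer \<Rightarrow> bool" where
  "llnf n L \<longleftrightarrow> (\<forall>(i,j)\<in>L. j = i + 1) \<and>
     \<not> (\<exists>i. 1 \<le> i \<and> i < n \<and> \<not> used L i \<and> \<not> used L (i+1))"

text \<open>Blocks of a layer (connected components of the comparator graph on 1..n).\<close>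
definition block_of :: "layer \<Rightarrow> nat \<Rightarrow> nat set" where
  "block_of L c = {c} \<union> {j. (c,j) \<in> L} \<union> {i. (i,c) \<in> L}"

definition blocks :: "nat \<Rightarrow> layer \<Rightarrow> nat set set" where
  "blocks n L = block_of L ` {1..n}"

definition co_saturated :: "nat \<Rightarrow> network \<Rightarrow> bool" where
  "co_saturated n C \<longleftrightarrow>
     sorting_network n C \<and>
     llnf n (last_layer C) \<and>
     (\<forall>B\<in>blocks n (last_layer C). \<forall>B'\<in>blocks n (last_layer C).
        Max B + 1 = Min B' \<longrightarrow>
        \<not> ((\<exists>c\<in>B. \<not> used (prev_layer C) c) \<and> (\<exists>c\<in>B'. \<not> used (prev_layer C) c))) \<and>
     (\<forall>i. (i, i+1) \<in> last_layer C \<and> \<not> used (prev_layer C) i \<and> \<not> used (prev_layer C) (i+1)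
        \<longrightarrow> (2 \<le> i \<longrightarrow> used (last_layer C) (i - 1)) \<and>
            (i + 2 \<le> n \<longrightarrow> used (last_layer C) (i + 2)))"

end

theory Submission
  imports Defs
begin

text \<open>Write a sorting network of depth at least two as \<open>Q; P; L\<close>. The heart of the proof is
  that after \<open>Q\<close> every inversion, a one on channel \<open>a\<close> above a zero on channel \<open>b > a\<close>,
  is a comparator \<open>(a, a + 1)\<close> of \<open>L\<close>. For a non-adjacent comparator \<open>(p, q)\<close> of \<open>L\<close> this
  follows because an input that is inverted at \<open>(p, q)\<close> after \<open>Q\<close> stays inverted when a one is
  moved to another channel, by monotonicity and since the output of a sorting network is a
  threshold function of the number of ones. Moving ones one by one reaches the sorted input
  of the same weight, which \<open>Q\<close> does not change, a contradiction.

  Hence \<open>L\<close> may be replaced by any last layer in normal form containing its adjacent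
  comparators, and \<open>P\<close> may be completed to a layer with at most one unused channel: the new
  comparators of \<open>P\<close> only act on inversions, which the last layer exchanges anyway. With at
  most one channel unused in the penultimate layer, the two remaining conditions of
  co-saturation hold trivially. Depths 0 and 1 are possible only for at most 1 and 2
  channels, where every last layer in normal form is co-saturated.\<close>

lemma is_layerD:
  assumes "is_layer n L" "(i, j) \<in> L"
  shows "1 \<le> i" "i < j" "j \<le> n"
  using assms unfolding is_layer_def by blast+

lemma is_layer_disjoint:
  assumes "is_layer n L" "(a, b) \<in> L" "(c, d) \<in> L" "(a, b) \<noteq> (c, d)"
  shows "{a, b} \<inter> {c, d} = {}"
  using assms unfolding is_layer_def by (metis fst_conv snd_conv)

lemma is_layer_subset: "is_layer n L \<Longrightarrow> A \<subseteq> L \<Longrightarrow> is_layer n A"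
  unfolding is_layer_def by blast

lemma is_layer_finite:
  assumes "is_layer n L"
  shows "finite L"
proof (rule finite_subset)
  show "L \<subseteq> {1..n} \<times> {1..n}"
    using is_layerD[OF assms] by fastforce
qed simp

lemma is_layer_insert:
  assumes "is_layer n L" "1 \<le> a" "a < b" "b \<le> n" "\<not> used L a" "\<not> used L b"
  shows "is_layer n (insert (a, b) L)"
proof -
  have "{fst c, snd c} \<inter> {a, b} = {}" if "c \<in> L" for c
    using that assms(5,6) unfolding used_def by fastforce
  then show ?thesis
    using assms(1-4) unfolding is_layer_def by (simp add: Int_commute) blast
qed

lemma is_network_Cons: "is_network n (L # C) \<longleftrightarrow> is_layer n L \<and> is_network n C"
  and is_network_append: "is_network n (C @ D) \<longleftrightarrow> is_network n C \<and> is_network n D"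
  unfolding is_network_def by auto

lemma used_iff: "used L k \<longleftrightarrow> (\<exists>j. (k, j) \<in> L) \<or> (\<exists>i. (i, k) \<in> L)"
  unfolding used_def by auto

lemma channel_cases:
  obtains "\<not> used L k" | j where "(k, j) \<in> L" | i where "(i, k) \<in> L"
  using used_iff by blast

lemma not_used_sublayer:
  assumes "is_layer n L" "A \<subseteq> L" "(i, j) \<in> L - A"
  shows "\<not> used A i" "\<not> used A j"
  using assms is_layer_disjoint[OF assms(1) _ assms(3)[THEN DiffD1]] unfolding used_def by blast+

lemma apply_layer_fst:
  assumes "is_layer n L" "(i, j) \<in> L"
  shows "apply_layer L y i = (y i \<and> y j)"
proof -
  have "(THE j. (i, j) \<in> L) = j"
    using assms is_layer_disjoint[OF assms(1)] by (intro the_equality) blast+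
  with assms(2) show ?thesis
    unfolding apply_layer_def by (auto simp: min_def)
qed

lemma apply_layer_snd:
  assumes "is_layer n L" "(i, j) \<in> L"
  shows "apply_layer L y j = (y i \<or> y j)"
proof -
  have "(THE i. (i, j) \<in> L) = i"
    using assms is_layer_disjoint[OF assms(1)] by (intro the_equality) blast+
  moreover have "(j, k) \<notin> L" for k
    using assms is_layer_disjoint[OF assms(1), of i j j k] is_layerD[OF assms(1)] by fastforce
  ultimately show ?thesis
    using assms(2) unfolding apply_layer_def by (auto simp: max_def)
qed

lemma apply_layer_unused: "\<not> used L k \<Longrightarrow> apply_layer L y k = y k"
  unfolding apply_layer_def used_def by auto

lemma apply_sublayer_fst:
  assumes "is_layer n L" "A \<subseteq> L" "(i, j) \<in> L"
  shows "apply_layer A y i = (if (i, j) \<in> A then y i \<and> y j else y i)"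
  using assms apply_layer_fst[OF is_layer_subset[OF assms(1,2)]]
    apply_layer_unused not_used_sublayer by auto

lemma apply_sublayer_snd:
  assumes "is_layer n L" "A \<subseteq> L" "(i, j) \<in> L"
  shows "apply_layer A y j = (if (i, j) \<in> A then y i \<or> y j else y j)"
  using assms apply_layer_snd[OF is_layer_subset[OF assms(1,2)]]
    apply_layer_unused not_used_sublayer by auto

lemma apply_sublayer_unused: "A \<subseteq> L \<Longrightarrow> \<not> used L k \<Longrightarrow> apply_layer A y k = y k"
  by (rule apply_layer_unused) (auto simp: used_def)

lemma apply_layer_diff:
  assumes "is_layer n L" "A \<subseteq> L"
  shows "apply_layer L y = apply_layer (L - A) (apply_layer A y)"
proof
  fix k
  show "apply_layer L y k = apply_layer (L - A) (apply_layer A y) k"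
  proof (cases rule: channel_cases[of L k])
    case 1
    then show ?thesis
      by (simp add: apply_layer_unused apply_sublayer_unused[OF assms(2)]
          apply_sublayer_unused[OF Diff_subset])
  next
    case (2 j)
    then show ?thesis
      using assms apply_sublayer_fst[of n L _ k j] apply_sublayer_snd[of n L _ k j] by auto
  next
    case (3 i)
    then show ?thesis
      using assms apply_sublayer_fst[of n L _ i k] apply_sublayer_snd[of n L _ i k] by auto
  qed
qed

lemma apply_layer_absorb:
  assumes "is_layer n L" "A \<subseteq> L"
  shows "apply_layer L (apply_layer A y) = apply_layer L y"
proof
  fix k
  show "apply_layer L (apply_layer A y) k = apply_layer L y k"
  proof (cases rule: channel_cases[of L k])
    case 1
    then show ?thesis
      by (simp add: apply_layer_unused apply_sublayer_unused[OF assms(2)])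
  next
    case (2 j)
    then show ?thesis
      using assms apply_sublayer_fst[of n L _ k j] apply_sublayer_snd[of n L _ k j] by auto
  next
    case (3 i)
    then show ?thesis
      using assms apply_sublayer_fst[of n L _ i k] apply_sublayer_snd[of n L _ i k] by auto
  qed
qed

definition inversions :: "nat \<Rightarrow> (nat \<Rightarrow> bool) \<Rightarrow> (nat \<times> nat) set" where
  "inversions n y = {(i, j). 1 \<le> i \<and> i < j \<and> j \<le> n \<and> y i \<and> \<not> y j}"

lemma apply_layer_inversions:
  assumes "is_layer n L"
  shows "apply_layer L y = apply_layer (L \<inter> inversions n y) y"
proof
  fix k
  show "apply_layer L y k = apply_layer (L \<inter> inversions n y) y k"
  proof (cases rule: channel_cases[of L k])
    case 1
    then show ?thesis using apply_sublayer_unused[of _ L] by auto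
  next
    case (2 j)
    then show ?thesis
      using assms is_layerD[OF assms 2] apply_layer_fst[OF assms 2]
        apply_sublayer_fst[OF assms _ 2, of "L \<inter> inversions n y"]
      by (auto simp: inversions_def)
  next
    case (3 i)
    then show ?thesis
      using assms is_layerD[OF assms 3] apply_layer_snd[OF assms 3]
        apply_sublayer_snd[OF assms _ 3, of "L \<inter> inversions n y"]
      by (auto simp: inversions_def)
  qed
qed

lemma apply_layer_sorted:
  assumes "is_layer n L" "sorted_on n y"
  shows "apply_layer L y = y"
proof
  fix k
  have ordered: "y i \<le> y j" if "(i, j) \<in> L" for i j
    using assms(2) is_layerD[OF assms(1) that] unfolding sorted_on_def by simp
  show "apply_layer L y k = y k"
  proof (cases rule: channel_cases[of L k])
    case 1
    then show ?thesis by (rule apply_layer_unused)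
  next
    case (2 j)
    then show ?thesis using ordered[OF 2] apply_layer_fst[OF assms(1) 2] by auto
  next
    case (3 i)
    then show ?thesis using ordered[OF 3] apply_layer_snd[OF assms(1) 3] by auto
  qed
qed

lemma apply_layer_mono: "(\<And>k. x k \<le> y k) \<Longrightarrow> apply_layer L x k \<le> apply_layer L y k"
  unfolding apply_layer_def by (auto simp: min_def max_def le_bool_def)

lemma apply_layer_single:
  assumes "i < j"
  shows "apply_layer {(i, j)} y = (if y i \<and> \<not> y j then y(i := False, j := True) else y)"
  using assms unfolding apply_layer_def by (auto simp: fun_eq_iff)

section \<open>Networks and the number of ones\<close>

lemma run_Nil [simp]: "run [] x = x"
  and run_Cons [simp]: "run (L # C) x = run C (apply_layer L x)"
  and run_append [simp]: "run (C @ D) x = run D (run C x)"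
  by (simp_all add: run_def)

lemma run_mono: "(\<And>k. x k \<le> y k) \<Longrightarrow> run C x k \<le> run C y k"
proof (induction C arbitrary: x y)
  case (Cons L C)
  have "apply_layer L x k \<le> apply_layer L y k" for k
    using Cons.prems by (rule apply_layer_mono)
  then show ?case
    by (simp only: run_Cons) (rule Cons.IH)
qed simp

lemma run_sorted: "is_network n C \<Longrightarrow> sorted_on n y \<Longrightarrow> run C y = y"
  by (induction C) (auto simp: is_network_Cons apply_layer_sorted)

lemma sorting_network_cong:
  assumes "sorting_network n C" "is_network n C'" "\<And>x. run C' x = run C x"
  shows "sorting_network n C'"
  using assms unfolding sorting_network_def by simp

definition weight :: "nat \<Rightarrow> (nat \<Rightarrow> bool) \<Rightarrow> nat" where
  "weight n x = card {k \<in> {1..n}. x k}"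

lemma weight_le: "weight n x \<le> n"
proof -
  have "card {k \<in> {1..n}. x k} \<le> card {1..n}"
    by (rule card_mono) auto
  then show ?thesis by (simp add: weight_def)
qed

lemma weight_upd_False:
  assumes "k \<in> {1..n}" "x k"
  shows "weight n (x(k := False)) + 1 = weight n x"
proof -
  have "{m \<in> {1..n}. (x(k := False)) m} = {m \<in> {1..n}. x m} - {k}" by auto
  then show ?thesis
    unfolding weight_def using assms card_Suc_Diff1[of "{m \<in> {1..n}. x m}" k] by simp
qed

lemma weight_upd_True:
  assumes "k \<in> {1..n}" "\<not> x k"
  shows "weight n (x(k := True)) = weight n x + 1"
proof -
  have "{m \<in> {1..n}. (x(k := True)) m} = insert k {m \<in> {1..n}. x m}"
    using assms by auto
  then show ?thesis
    unfolding weight_def using assms by simp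
qed

lemma weight_exchange:
  assumes "j \<in> {1..n}" "k \<in> {1..n}" "x j" "\<not> x k"
  shows "weight n (x(j := False, k := True)) = weight n x"
  using assms weight_upd_False[of j n x] weight_upd_True[of k n "x(j := False)"] by auto

lemma weight_apply_layer:
  assumes "is_layer n L"
  shows "weight n (apply_layer L y) = weight n y"
  using is_layer_finite[OF assms] assms
proof (induction L arbitrary: y rule: finite_induct)
  case empty
  then show ?case by (simp add: apply_layer_unused used_def fun_eq_iff)
next
  case (insert c L)
  obtain i j where c: "c = (i, j)" by fastforce
  have "insert c L - L = {(i, j)}"
    using insert.hyps(2) c by blast
  then have "apply_layer (insert c L) y = apply_layer {(i, j)} (apply_layer L y)"
    using apply_layer_diff[OF insert.prems subset_insertI] by simp
  moreover have "is_layer n L"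
    using is_layer_subset[OF insert.prems] by blast
  moreover have "1 \<le> i" "i < j" "j \<le> n"
    using is_layerD[OF insert.prems, of i j] c by auto
  ultimately show ?case
    using insert.IH by (simp add: apply_layer_single weight_exchange)
qed

lemma weight_run: "is_network n C \<Longrightarrow> weight n (run C x) = weight n x"
  by (induction C arbitrary: x) (simp_all add: is_network_Cons weight_apply_layer)

lemma weight_exchange_induct:
  assumes "P x" "weight n x = weight n y" "\<And>k. k \<notin> {1..n} \<Longrightarrow> x k = y k"
    and exchange: "\<And>x j k. P x \<Longrightarrow> j \<in> {1..n} \<Longrightarrow> k \<in> {1..n} \<Longrightarrow> x j \<Longrightarrow> \<not> x k
      \<Longrightarrow> P (x(j := False, k := True))"
  shows "P y"
  using assms(1-3)
proof (induction "card {k \<in> {1..n}. x k \<and> \<not> y k}" arbitrary: x rule: less_induct)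
  case less
  have ones_eq: "{k \<in> {1..n}. x k} = {k \<in> {1..n}. y k}"
    if "{k \<in> {1..n}. x k} \<subseteq> {k \<in> {1..n}. y k} \<or> {k \<in> {1..n}. y k} \<subseteq> {k \<in> {1..n}. x k}"
    using that card_subset_eq[of "{k \<in> {1..n}. y k}" "{k \<in> {1..n}. x k}"]
      card_subset_eq[of "{k \<in> {1..n}. x k}" "{k \<in> {1..n}. y k}"] less.prems(2)
    unfolding weight_def by auto
  show ?case
  proof (cases "\<exists>j \<in> {1..n}. x j \<and> \<not> y j")
    case False
    then have "{k \<in> {1..n}. x k} = {k \<in> {1..n}. y k}"
      using ones_eq by blast
    then have "x k = y k" for k
      using less.prems(3)[of k] by (cases "k \<in> {1..n}") blast+
    then have "x = y" by (rule ext)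
    then show ?thesis using less.prems(1) by simp
  next
    case True
    then obtain j where j: "j \<in> {1..n}" "x j" "\<not> y j" by blast
    then have "\<not> {k \<in> {1..n}. y k} \<subseteq> {k \<in> {1..n}. x k}"
      using ones_eq by blast
    then obtain k where k: "k \<in> {1..n}" "\<not> x k" "y k"
      by blast
    let ?x' = "x(j := False, k := True)"
    have "{m \<in> {1..n}. ?x' m \<and> \<not> y m} = {m \<in> {1..n}. x m \<and> \<not> y m} - {j}"
      using j k by auto
    moreover have "card ({m \<in> {1..n}. x m \<and> \<not> y m} - {j}) < card {m \<in> {1..n}. x m \<and> \<not> y m}"
      using j by (intro card_Diff1_less) simp_all
    ultimately have "card {m \<in> {1..n}. ?x' m \<and> \<not> y m} < card {m \<in> {1..n}. x m \<and> \<not> y m}"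
      by simp
    moreover have "P ?x'"
      using exchange[OF less.prems(1) j(1) k(1) j(2) k(2)] .
    moreover have "weight n ?x' = weight n y"
      using weight_exchange[OF j(1) k(1) j(2) k(2)] less.prems(2) by simp
    moreover have "?x' m = y m" if "m \<notin> {1..n}" for m
      using that j(1) k(1) less.prems(3) by auto
    ultimately show ?thesis
      by (rule less.hyps)
  qed
qed

lemma sorted_onD: "sorted_on n z \<Longrightarrow> 1 \<le> i \<Longrightarrow> i \<le> j \<Longrightarrow> j \<le> n \<Longrightarrow> z i \<Longrightarrow> z j"
  unfolding sorted_on_def by (metis le_boolD)

lemma sorted_on_threshold:
  assumes "sorted_on n z" "1 \<le> k" "k \<le> n"
  shows "z k \<longleftrightarrow> n - weight n z < k"
proof
  assume "z k"
  then have "{k..n} \<subseteq> {m \<in> {1..n}. z m}"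
    using assms sorted_onD[OF assms(1,2)] by auto
  then have "card {k..n} \<le> weight n z"
    unfolding weight_def by (intro card_mono) auto
  then show "n - weight n z < k" using assms by simp
next
  assume "n - weight n z < k"
  show "z k"
  proof (rule ccontr)
    assume "\<not> z k"
    then have "{m \<in> {1..n}. z m} \<subseteq> {k + 1..n}"
      using sorted_onD[OF assms(1), of _ k] assms(3) by (auto simp: not_less_eq_eq[symmetric])
    then have "weight n z \<le> card {k + 1..n}"
      unfolding weight_def by (intro card_mono) auto
    then show False using \<open>n - weight n z < k\<close> assms by simp
  qed
qed

lemma sorting_network_output:
  assumes "sorting_network n C" "1 \<le> k" "k \<le> n"
  shows "run C x k \<longleftrightarrow> n - weight n x < k"
  using assms sorted_on_threshold[of n "run C x" k] weight_run[of n C x]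
  unfolding sorting_network_def by simp

section \<open>Comparators of a last layer\<close>

context
  fixes n :: nat and Q :: network and L :: layer and p q :: nat
  assumes sorting: "sorting_network n (Q @ [L])" and pq: "(p, q) \<in> L"
begin

private lemma layer_L: "is_layer n L"
  using sorting unfolding sorting_network_def is_network_def by simp

private lemma pq_bounds: "1 \<le> p" "p < q" "q \<le> n"
  using is_layerD[OF layer_L pq] by simp_all

private lemma output_p: "apply_layer L (run Q x) p \<longleftrightarrow> n - weight n x < p"
  using sorting_network_output[OF sorting, of p x] pq_bounds by simp

private lemma output_q: "apply_layer L (run Q x) q \<longleftrightarrow> n - weight n x < q"
  using sorting_network_output[OF sorting, of q x] pq_bounds by simp

lemma inverted_weight:
  assumes "run Q x p" "\<not> run Q x q"
  shows "p \<le> n - weight n x" "n - weight n x < q"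
  using assms output_p[of x] output_q[of x]
    apply_layer_fst[OF layer_L pq] apply_layer_snd[OF layer_L pq] by auto

lemma inverted_upward:
  assumes "run Q x p" "\<not> run Q x q" "\<And>k. x k \<le> x' k" "p \<le> n - weight n x'"
  shows "run Q x' p \<and> \<not> run Q x' q"
proof -
  have "run Q x' p"
    using run_mono[of x x' Q p] assms(1,3) by auto
  moreover have "\<not> apply_layer L (run Q x') p"
    using output_p assms(4) by simp
  ultimately show ?thesis
    using apply_layer_fst[OF layer_L pq] by simp
qed

lemma inverted_downward:
  assumes "run Q x p" "\<not> run Q x q" "\<And>k. x' k \<le> x k" "n - weight n x' < q"
  shows "run Q x' p \<and> \<not> run Q x' q"
proof -
  have "\<not> run Q x' q"
    using run_mono[of x' x Q q] assms(2,3) by auto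
  moreover have "apply_layer L (run Q x') q"
    using output_q assms(4) by simp
  ultimately show ?thesis
    using apply_layer_snd[OF layer_L pq] by simp
qed

text \<open>As \<open>q \<ge> p + 2\<close>, the threshold \<open>n - weight n x \<in> [p, q)\<close> can move by one in some
  direction without leaving \<open>[p, q)\<close>; the exchange then goes through the input with the moved
  one removed, or with it added at its target.\<close>

lemma inverted_exchange:
  assumes "q \<noteq> p + 1" "run Q x p" "\<not> run Q x q"
    and jk: "j \<in> {1..n}" "k \<in> {1..n}" "x j" "\<not> x k"
  shows "run Q (x(j := False, k := True)) p \<and> \<not> run Q (x(j := False, k := True)) q"
proof -
  let ?x' = "x(j := False, k := True)"
  have weight': "weight n ?x' = weight n x"
    using weight_exchange[OF jk] .
  have t: "p \<le> n - weight n x" "n - weight n x < q"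
    using inverted_weight[OF assms(2,3)] by simp_all
  have "j \<noteq> k" using jk by auto
  show ?thesis
  proof (cases "n - weight n x + 1 < q")
    case True
    let ?lo = "x(j := False)"
    have "weight n ?lo + 1 = weight n x"
      using weight_upd_False[of j n x, OF jk(1,3)] .
    then have "n - weight n ?lo < q"
      using True weight_le[of n x] by linarith
    then have "run Q ?lo p \<and> \<not> run Q ?lo q"
      using inverted_downward[OF assms(2,3)] by (simp add: le_bool_def)
    then show ?thesis
      using inverted_upward[of ?lo ?x'] weight' t \<open>j \<noteq> k\<close> by (auto simp: le_bool_def)
  next
    case False
    let ?hi = "x(k := True)"
    have "weight n ?hi = weight n x + 1"
      using weight_upd_True[of k n x, OF jk(2,4)] .
    moreover have "p + 2 \<le> q"
      using pq_bounds assms(1) by linarith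
    ultimately have "p \<le> n - weight n ?hi"
      using False t by linarith
    then have "run Q ?hi p \<and> \<not> run Q ?hi q"
      using inverted_upward[OF assms(2,3)] by (simp add: le_bool_def)
    then show ?thesis
      using inverted_downward[of ?hi ?x'] weight' t \<open>j \<noteq> k\<close> by (auto simp: le_bool_def)
  qed
qed

lemma nonadjacent_not_inverted:
  assumes "q \<noteq> p + 1"
  shows "\<not> (run Q x p \<and> \<not> run Q x q)"
proof
  assume inverted: "run Q x p \<and> \<not> run Q x q"
  define s where "s k = (if k \<in> {1..n} then n - weight n x < k else x k)" for k
  have "sorted_on n s"
    unfolding sorted_on_def s_def by (auto simp: le_bool_def)
  have "{k \<in> {1..n}. s k} = {n - weight n x + 1..n}"
    unfolding s_def by auto
  then have "weight n s = n - (n - weight n x)"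
    by (simp add: weight_def)
  have "run Q s p \<and> \<not> run Q s q"
  proof (rule weight_exchange_induct[where P = "\<lambda>x. run Q x p \<and> \<not> run Q x q" and x = x and n = n])
    show "run Q x p \<and> \<not> run Q x q" by (rule inverted)
    show "weight n x = weight n s"
      using \<open>weight n s = n - (n - weight n x)\<close> weight_le[of n x] by simp
    show "x k = s k" if "k \<notin> {1..n}" for k
      using that unfolding s_def by auto
    show "run Q (z(j := False, k := True)) p \<and> \<not> run Q (z(j := False, k := True)) q"
      if "run Q z p \<and> \<not> run Q z q" "j \<in> {1..n}" "k \<in> {1..n}" "z j" "\<not> z k" for z j k
      using inverted_exchange[OF assms] that by blast
  qed
  moreover have "run Q s = s"
    using run_sorted[OF _ \<open>sorted_on n s\<close>] sorting
    unfolding sorting_network_def is_network_append by simp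
  ultimately show False
    using sorted_onD[OF \<open>sorted_on n s\<close>, of p q] pq_bounds by simp
qed

end

section \<open>Inversions before the last layer\<close>

lemma apply_layer_keeps_one:
  assumes "is_layer n L" "y a" "\<And>j. (a, j) \<notin> L"
  shows "apply_layer L y a"
  using assms apply_layer_snd[OF assms(1)] apply_layer_unused[of L a]
  by (cases rule: channel_cases[of L a]) auto

lemma apply_layer_keeps_zero:
  assumes "is_layer n L" "\<not> y b" "\<And>i. (i, b) \<notin> L"
  shows "\<not> apply_layer L y b"
  using assms apply_layer_fst[OF assms(1)] apply_layer_unused[of L b]
  by (cases rule: channel_cases[of L b]) auto

text \<open>A one at \<open>a\<close> ends at \<open>a\<close> or \<open>a + 1\<close>, a zero at \<open>b\<close> at \<open>b\<close> or \<open>b - 1\<close>;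
  sortedness of the output forces these to cross, i.e.\ \<open>b = a + 1\<close> with a comparator
  between them.\<close>

lemma adjacent_layer_sorts_inversions:
  assumes L: "is_layer n L" "\<forall>(i, j) \<in> L. j = i + 1"
    and sorted: "sorted_on n (apply_layer L y)" and inv: "(a, b) \<in> inversions n y"
  shows "(a, b) \<in> L"
proof -
  have ab: "1 \<le> a" "a < b" "b \<le> n" "y a" "\<not> y b"
    using inv by (auto simp: inversions_def)
  define a' where "a' = (if (a, a + 1) \<in> L then a + 1 else a)"
  define b' where "b' = (if (b - 1, b) \<in> L then b - 1 else b)"
  have one: "apply_layer L y a'"
  proof (cases "(a, a + 1) \<in> L")
    case True
    then show ?thesis
      using apply_layer_snd[OF L(1) True] ab(4) unfolding a'_def by simp
  next
    case False
    then have "(a, j) \<notin> L" for j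
      using L(2) by auto
    then show ?thesis
      using apply_layer_keeps_one[of n L y a] L(1) ab(4) False unfolding a'_def by simp
  qed
  have zero: "\<not> apply_layer L y b'"
  proof (cases "(b - 1, b) \<in> L")
    case True
    then show ?thesis
      using apply_layer_fst[OF L(1) True] ab(5) unfolding b'_def by simp
  next
    case False
    then have "(i, b) \<notin> L" for i
      using L(2) by fastforce
    then show ?thesis
      using apply_layer_keeps_zero[of n L y b] L(1) ab(5) False unfolding b'_def by simp
  qed
  have "1 \<le> a'" "b' \<le> n"
    using ab unfolding a'_def b'_def by auto
  then have "\<not> a' \<le> b'"
    using sorted_onD[OF sorted, of a' b'] one zero by blast
  then show ?thesis
    using ab unfolding a'_def b'_def by (cases "b = a + 1") (auto split: if_splits)
qed

definition adjacent_part :: "layer \<Rightarrow> layer" where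
  "adjacent_part L = {c \<in> L. snd c = fst c + 1}"

lemma sorting_network_inversions_before_last:
  assumes sorting: "sorting_network n (Q @ [L])"
  shows "inversions n (run Q x) \<subseteq> adjacent_part L"
proof -
  let ?y = "run Q x"
  have L: "is_layer n L"
    using sorting unfolding sorting_network_def is_network_def by simp
  have adj: "is_layer n (adjacent_part L)" "\<forall>(i, j) \<in> adjacent_part L. j = i + 1"
    using is_layer_subset[OF L] by (auto simp: adjacent_part_def)
  have "(i, j) \<in> adjacent_part L" if "(i, j) \<in> L" "(i, j) \<in> inversions n ?y" for i j
    using nonadjacent_not_inverted[OF sorting that(1), of x] that
    by (auto simp: adjacent_part_def inversions_def)
  then have "L \<inter> inversions n ?y \<subseteq> adjacent_part L"
    by auto
  then have "L \<inter> inversions n ?y = adjacent_part L \<inter> inversions n ?y"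
    by (auto simp: adjacent_part_def)
  then have "apply_layer L ?y = apply_layer (adjacent_part L) ?y"
    using apply_layer_inversions[OF L] apply_layer_inversions[OF adj(1)] by metis
  moreover have "sorted_on n (apply_layer L ?y)"
    using sorting unfolding sorting_network_def by simp
  ultimately show ?thesis
    using adjacent_layer_sorts_inversions[OF adj] by auto
qed

lemma sorting_network_replace_last:
  assumes sorting: "sorting_network n (Q @ [L])"
    and L': "is_layer n L'" "adjacent_part L \<subseteq> L'"
  shows "apply_layer L' (run Q x) = apply_layer L (run Q x)"
proof -
  let ?inv = "inversions n (run Q x)"
  have L: "is_layer n L"
    using sorting unfolding sorting_network_def is_network_def by simp
  have "?inv \<subseteq> L'" "?inv \<subseteq> L"
    using sorting_network_inversions_before_last[OF sorting] L'(2)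
    by (auto simp: adjacent_part_def)
  then have "L' \<inter> ?inv = L \<inter> ?inv" by blast
  then show ?thesis
    using apply_layer_inversions[OF L'(1)] apply_layer_inversions[OF L] by metis
qed

lemma sorting_network_replace_last_two:
  assumes sorting: "sorting_network n (Q @ [P, L])"
    and P': "is_layer n P'" "P \<subseteq> P'" and L': "is_layer n L'" "adjacent_part L \<subseteq> L'"
  shows "run (Q @ [P', L']) x = run (Q @ [P, L]) x"
proof -
  let ?z = "run Q x"
  let ?y = "apply_layer P ?z"
  have sorting': "sorting_network n ((Q @ [P]) @ [L])"
    using sorting by simp
  have "inversions n ?y \<subseteq> L'"
    using sorting_network_inversions_before_last[OF sorting', of x] L'(2) by simp
  have "run (Q @ [P', L']) x = apply_layer L' (apply_layer (P' - P) ?y)"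
    using apply_layer_diff[OF P'] by simp
  also have "\<dots> = apply_layer L' (apply_layer ((P' - P) \<inter> inversions n ?y) ?y)"
    using apply_layer_inversions[OF is_layer_subset[OF P'(1) Diff_subset]] by simp
  also have "\<dots> = apply_layer L' ?y"
    using apply_layer_absorb[OF L'(1)] \<open>inversions n ?y \<subseteq> L'\<close> by blast
  also have "\<dots> = apply_layer L ?y"
    using sorting_network_replace_last[OF sorting' L', of x] by simp
  finally show ?thesis by simp
qed

section \<open>Saturating layers\<close>

lemma greedy_layer_extension:
  assumes "is_layer n L0" "S L0"
    and step: "\<And>L. is_layer n L \<Longrightarrow> S L \<Longrightarrow> \<not> T L \<Longrightarrow>
      \<exists>a b. 1 \<le> a \<and> a < b \<and> b \<le> n \<and> \<not> used L a \<and> \<not> used L b \<and> S (insert (a, b) L)"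
  shows "\<exists>L. L0 \<subseteq> L \<and> is_layer n L \<and> S L \<and> T L"
  using assms(1,2)
proof (induction "card {k \<in> {1..n}. \<not> used L0 k}" arbitrary: L0 rule: less_induct)
  case less
  show ?case
  proof (cases "T L0")
    case True
    then show ?thesis using less.prems by blast
  next
    case False
    then obtain a b where ab: "1 \<le> a" "a < b" "b \<le> n" "\<not> used L0 a" "\<not> used L0 b"
      and S: "S (insert (a, b) L0)"
      using step[OF less.prems False] by blast
    have "{k \<in> {1..n}. \<not> used (insert (a, b) L0) k} \<subseteq> {k \<in> {1..n}. \<not> used L0 k}"
      by (auto simp: used_def)
    moreover have "a \<in> {k \<in> {1..n}. \<not> used L0 k}" "a \<notin> {k \<in> {1..n}. \<not> used (insert (a, b) L0) k}"
      using ab by (auto simp: used_def)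
    ultimately have "{k \<in> {1..n}. \<not> used (insert (a, b) L0) k} \<subset> {k \<in> {1..n}. \<not> used L0 k}"
      by blast
    then have "card {k \<in> {1..n}. \<not> used (insert (a, b) L0) k} < card {k \<in> {1..n}. \<not> used L0 k}"
      by (rule psubset_card_mono[rotated]) simp
    then show ?thesis
      using less.hyps[OF _ is_layer_insert[OF less.prems(1) ab] S] by blast
  qed
qed

lemma llnf_extension:
  assumes "is_layer n L"
  shows "\<exists>L'. adjacent_part L \<subseteq> L' \<and> is_layer n L' \<and> llnf n L'"
proof -
  let ?adjacent = "\<lambda>L'. \<forall>(a, b) \<in> L'. b = a + 1"
  have step: "\<exists>a b. 1 \<le> a \<and> a < b \<and> b \<le> n \<and> \<not> used L' a \<and> \<not> used L' b \<and>
      ?adjacent (insert (a, b) L')"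
    if "is_layer n L'" and adjacent: "?adjacent L'" and not_llnf: "\<not> llnf n L'" for L'
  proof -
    obtain i where "1 \<le> i" "i < n" "\<not> used L' i" "\<not> used L' (i + 1)"
      using adjacent not_llnf unfolding llnf_def by blast
    then show ?thesis
      using adjacent by (intro exI[of _ i] exI[of _ "i + 1"]) auto
  qed
  have "is_layer n (adjacent_part L)" "?adjacent (adjacent_part L)"
    using is_layer_subset[OF assms] by (auto simp: adjacent_part_def)
  from greedy_layer_extension[OF this step] show ?thesis
    by blast
qed

definition maximal_layer :: "nat \<Rightarrow> layer \<Rightarrow> bool" where
  "maximal_layer n P \<longleftrightarrow> (\<forall>u \<in> {1..n}. \<forall>v \<in> {1..n}. \<not> used P u \<longrightarrow> \<not> used P v \<longrightarrow> u = v)"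

lemma maximal_layer_extension:
  assumes "is_layer n P"
  shows "\<exists>P'. P \<subseteq> P' \<and> is_layer n P' \<and> maximal_layer n P'"
proof -
  have step: "\<exists>a b. 1 \<le> a \<and> a < b \<and> b \<le> n \<and> \<not> used P' a \<and> \<not> used P' b \<and> True"
    if not_maximal: "\<not> maximal_layer n P'" for P'
  proof -
    obtain u v where "u \<in> {1..n}" "v \<in> {1..n}" "\<not> used P' u" "\<not> used P' v" "u \<noteq> v"
      using not_maximal unfolding maximal_layer_def by blast
    then show ?thesis
      by (intro exI[of _ "min u v"] exI[of _ "max u v"]) (auto simp: min_def max_def)
  qed
  from greedy_layer_extension[of n P "\<lambda>_. True" "maximal_layer n", OF assms TrueI step] show ?thesis
    by blast
qed

lemma is_layer_last_layer:
  assumes "is_network n N"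
  shows "is_layer n (last_layer N)"
proof (cases "N = []")
  case True
  then show ?thesis by (simp add: last_layer_def is_layer_def)
next
  case False
  then show ?thesis
    using assms last_in_set[OF False] by (simp add: last_layer_def is_network_def)
qed

lemma blocks_subset:
  assumes "is_layer n L" "B \<in> blocks n L"
  shows "B \<subseteq> {1..n}" "finite B" "B \<noteq> {}"
proof -
  obtain k where k: "k \<in> {1..n}" "B = block_of L k"
    using assms(2) unfolding blocks_def by auto
  then show B: "B \<subseteq> {1..n}"
    unfolding block_of_def using is_layerD[OF assms(1)] by fastforce
  show "finite B"
    using finite_subset[OF B] by simp
  show "B \<noteq> {}"
    using k unfolding block_of_def by simp
qed

lemma co_saturatedI_maximal_prev_layer:
  assumes sorting: "sorting_network n N" and llnf: "llnf n (last_layer N)"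
    and maximal: "maximal_layer n (prev_layer N)"
  shows "co_saturated n N"
proof -
  have free: "u = v" if "u \<in> {1..n}" "v \<in> {1..n}" "\<not> used (prev_layer N) u"
    "\<not> used (prev_layer N) v" for u v
    using maximal that unfolding maximal_layer_def by blast
  have L: "is_layer n (last_layer N)"
    using sorting is_layer_last_layer unfolding sorting_network_def by blast
  have "False" if "B \<in> blocks n (last_layer N)" "B' \<in> blocks n (last_layer N)"
    "Max B + 1 = Min B'" "c \<in> B" "\<not> used (prev_layer N) c" "c' \<in> B'" "\<not> used (prev_layer N) c'"
    for B B' c c'
  proof -
    have "c = c'"
      using free that blocks_subset[OF L] by blast
    moreover have "c \<le> Max B" "Min B' \<le> c'"
      using that blocks_subset[OF L] by simp_all
    ultimately show False
      using that(3) by simp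
  qed
  moreover have False if "(i, i + 1) \<in> last_layer N" "\<not> used (prev_layer N) i"
    "\<not> used (prev_layer N) (i + 1)" for i
    using free[of i "i + 1"] that is_layerD[OF L that(1)] by simp
  ultimately show ?thesis
    unfolding co_saturated_def using sorting llnf by blast
qed

lemma co_saturatedI_small:
  assumes "n \<le> 2" and sorting: "sorting_network n N" and llnf: "llnf n (last_layer N)"
  shows "co_saturated n N"
proof -
  let ?L = "last_layer N"
  have L: "is_layer n ?L"
    using sorting is_layer_last_layer unfolding sorting_network_def by blast
  have pair: "(1, 2) \<in> ?L" if "n = 2"
  proof -
    have "\<not> (1 \<le> (1::nat) \<and> 1 < n \<and> \<not> used ?L 1 \<and> \<not> used ?L (1 + 1))"
      using llnf unfolding llnf_def by blast
    then have "used ?L 1 \<or> used ?L 2"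
      using that by (simp add: numeral_2_eq_2)
    then obtain a b where "(a, b) \<in> ?L" "a = 1 \<or> b = 1 \<or> a = 2 \<or> b = 2"
      unfolding used_def by blast
    moreover have "a = 1" "b = 2"
      using is_layerD[OF L \<open>(a, b) \<in> ?L\<close>] that by simp_all
    ultimately show ?thesis
      by simp
  qed
  have block: "B = {1..n}" if B: "B \<in> blocks n ?L" for B
  proof -
    have sub: "B \<subseteq> {1..n}" "B \<noteq> {}"
      using blocks_subset[OF L B] by simp_all
    show ?thesis
    proof (cases "n = 2")
      case True
      obtain k where k: "k \<in> {1..n}" "B = block_of ?L k"
        using B unfolding blocks_def by auto
      then have "k = 1 \<or> k = 2"
        using True by auto
      then have "1 \<in> B" "2 \<in> B"
        using k(2) pair[OF True] unfolding block_of_def by auto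
      moreover have "{1..n} = {1, 2}"
        using True by auto
      ultimately show ?thesis
        using sub by auto
    next
      case False
      then have "{1..n} \<subseteq> {1}"
        using assms(1) by auto
      then show ?thesis
        using sub by (metis subset_singletonD subset_empty)
    qed
  qed
  have "Max B + 1 \<noteq> Min B'" if B: "B \<in> blocks n ?L" and B': "B' \<in> blocks n ?L" for B B'
  proof -
    obtain c where "c \<in> B"
      using blocks_subset(3)[OF L B] by blast
    moreover have "B' = B"
      using block[OF B] block[OF B'] by simp
    moreover have "Min B \<le> c" "c \<le> Max B"
      using \<open>c \<in> B\<close> blocks_subset(2)[OF L B] by simp_all
    ultimately show ?thesis
      by simp
  qed
  moreover have "(2 \<le> i \<longrightarrow> used ?L (i - 1)) \<and> (i + 2 \<le> n \<longrightarrow> used ?L (i + 2))"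
    if "(i, i + 1) \<in> ?L" for i
    using is_layerD[OF L that] assms(1) by simp
  ultimately show ?thesis
    unfolding co_saturated_def using sorting llnf by blast
qed

lemma sorting_network_Nil: "sorting_network n [] \<Longrightarrow> n \<le> 1"
proof (rule ccontr)
  assume "sorting_network n []" "\<not> n \<le> 1"
  then have "sorted_on n (\<lambda>k. k = 1)"
    unfolding sorting_network_def by simp
  then show False
    using sorted_onD[of n "\<lambda>k. k = 1" 1 2] \<open>\<not> n \<le> 1\<close> by simp
qed

lemma sorting_network_single: "sorting_network n [L] \<Longrightarrow> n \<le> 2"
proof (rule ccontr)
  assume "sorting_network n [L]" "\<not> n \<le> 2"
  then have "inversions n (\<lambda>k. k = 1) \<subseteq> adjacent_part L"
    using sorting_network_inversions_before_last[of n "[]" L] by simp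
  moreover have "(1, 3) \<in> inversions n (\<lambda>k. k = 1)"
    using \<open>\<not> n \<le> 2\<close> by (simp add: inversions_def)
  ultimately show False
    by (auto simp: adjacent_part_def)
qed

lemma co_saturated_depth_one:
  assumes sorting: "sorting_network n [L]"
  shows "\<exists>L'. co_saturated n [L']"
proof -
  have "is_layer n L"
    using sorting by (simp add: sorting_network_def is_network_def)
  then obtain L' where L': "adjacent_part L \<subseteq> L'" "is_layer n L'" "llnf n L'"
    using llnf_extension by blast
  have "sorting_network n [L']"
    using sorting_network_replace_last[of n "[]" L L'] sorting L'
    by (intro sorting_network_cong[OF sorting]) (simp_all add: is_network_def)
  then have "co_saturated n [L']"
    using sorting_network_single[OF sorting] L'(3)
    by (intro co_saturatedI_small) (simp_all add: last_layer_def)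
  then show ?thesis by blast
qed

lemma co_saturated_last_two:
  assumes sorting: "sorting_network n (Q @ [P, L])"
  shows "\<exists>P' L'. co_saturated n (Q @ [P', L'])"
proof -
  have "is_network n Q" "is_layer n P" "is_layer n L"
    using sorting by (simp_all add: sorting_network_def is_network_def)
  obtain L' where L': "adjacent_part L \<subseteq> L'" "is_layer n L'" "llnf n L'"
    using llnf_extension[OF \<open>is_layer n L\<close>] by blast
  obtain P' where P': "P \<subseteq> P'" "is_layer n P'" "maximal_layer n P'"
    using maximal_layer_extension[OF \<open>is_layer n P\<close>] by blast
  have "sorting_network n (Q @ [P', L'])"
    using sorting_network_replace_last_two[OF sorting P'(2,1) L'(2,1)] \<open>is_network n Q\<close> P'(2) L'(2)
    by (intro sorting_network_cong[OF sorting]) (simp_all add: is_network_def)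
  moreover have "last_layer (Q @ [P', L']) = L'" "prev_layer (Q @ [P', L']) = P'"
    by (simp_all add: last_layer_def prev_layer_def nth_append)
  ultimately have "co_saturated n (Q @ [P', L'])"
    using P'(3) L'(3) by (intro co_saturatedI_maximal_prev_layer) simp_all
  then show ?thesis by blast
qed

theorem theorem4:
  fixes n :: nat and C :: network
  assumes "sorting_network n C"
  shows "\<exists>N. length N = length C \<and> co_saturated n N"
proof (cases C rule: rev_cases)
  case Nil
  then have "co_saturated n C"
    using assms sorting_network_Nil[of n]
    by (intro co_saturatedI_small) (simp_all add: llnf_def last_layer_def)
  then show ?thesis by blast
next
  case (snoc Q L)
  show ?thesis
  proof (cases Q rule: rev_cases)
    case Nil
    then obtain L' where "co_saturated n [L']"
      using co_saturated_depth_one assms snoc by auto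
    then show ?thesis
      using snoc Nil by (intro exI[of _ "[L']"]) simp
  next
    case (snoc Q0 P)
    then obtain P' L' where "co_saturated n (Q0 @ [P', L'])"
      using co_saturated_last_two assms \<open>C = Q @ [L]\<close> by fastforce
    then show ?thesis
      using snoc \<open>C = Q @ [L]\<close> by (intro exI[of _ "Q0 @ [P', L']"]) simp
  qed
qed

end
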